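(* Let $X=(X_1,\dots,X_n)$ be a random vector in $\mathcal{X}^n$ whose distribution is exchangeable, let $T:\mathcal{X}^n\to\mathbb{R}$ be a fixed (measurable) function, and let $q$ be any probability distribution on $\mathcal{S}_n$. Let $M\ge1$ and draw $\sigma_0,\sigma_1,\dots,\sigma_M$ i.i.d. from $q$, independently of $X$. Define $$\bar P=\frac{\sum_{m=0}^M\sum_{m'=0}^M\mathbf{1}\{T(X_{\sigma_m\circ\sigma_{m'}^{-1}})\ge T(X)\}}{(1+M)^2}.$$ Then $\mathbb{P}\{\bar P\le\alpha\}\le2\alpha$ for all $\alpha\in[0,1]$.
   Context: $\mathcal{S}_n$ denotes the set (group) of all permutations of $[n]=\{1,\dots,n\}$. For $x\in\mathcal{X}^n$ and $\sigma\in\mathcal{S}_n$, $x_\sigma:=(x_{\sigma(1)},\dots,x_{\sigma(n)})$. $X$ is exchangeable means $X\stackrel{d}{=}X_\pi$ for every fixed $\pi\in\mathcal{S}_n$. *)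

theory Defs
  imports "HOL-Probability.Probability" "HOL-Combinatorics.Permutations"
begin

text \<open>Vectors in X^n are modelled as extensional functions on the index set {..<n}
  (elements of PiM {..<n} (\<lambda>_. N)); permutations of [n] as functions nat \<Rightarrow> nat
  that permute {..<n}.  x_sigma = (x (sigma 0), ..., x (sigma (n-1))).\<close>

definition permute_vec :: "(nat \<Rightarrow> nat) \<Rightarrow> (nat \<Rightarrow> 'a) \<Rightarrow> (nat \<Rightarrow> 'a)" where
  "permute_vec \<sigma> x = (\<lambda>i. x (\<sigma> i))"

definition exchangeable_rv ::
  "'w measure \<Rightarrow> nat \<Rightarrow> 'a measure \<Rightarrow> ('w \<Rightarrow> nat \<Rightarrow> 'a) \<Rightarrow> bool" where
  "exchangeable_rv P n N X \<longleftrightarrow>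
     (\<forall>\<pi>. \<pi> permutes {..<n} \<longrightarrow>
        distr P (PiM {..<n} (\<lambda>_. N)) (\<lambda>\<omega>. permute_vec \<pi> (X \<omega>))
          = distr P (PiM {..<n} (\<lambda>_. N)) X)"

end

theory Submission
  imports Defs
begin

text \<open>Fix the permutations \<open>s\<^sub>0, \<dots>, s\<^sub>M\<close> first. At \<open>y = x \<circ> s\<^sub>m\<close> the \<open>m\<close>-th
  inner sum \<open>p\<^sub>m(x)\<close> of the averaged p-value is the rank \<open>r\<^sub>m(y)\<close> of \<open>T(y \<circ> s\<^sub>m\<inverse>)\<close>
  among the values \<open>T(y \<circ> s\<^sub>j\<inverse>)\<close>, counted from above. With \<open>c = 2\<alpha>(M+1)\<close>, the
  averaged p-value can be at most \<open>\<alpha>\<close> only if \<open>\<Sum>\<^sub>m (c - p\<^sub>m)\<^sub>+ \<ge> \<alpha>(M+1)\<^sup>2\<close>, and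
  exchangeability replaces \<open>x \<circ> s\<^sub>m\<close> by \<open>X\<close> inside the expectation of each summand.
  Whatever the values, the rank deficits satisfy \<open>\<Sum>\<^sub>m (c - r\<^sub>m)\<^sub>+ \<le> c\<^sup>2/2\<close>, since the
  \<open>k\<close>-th smallest value has rank at least \<open>M + 2 - k\<close>; Markov's inequality gives the bound
  \<open>2\<alpha>\<close>. Random permutations are handled by conditioning on the permutation tuple, which is
  independent of \<open>X\<close> and almost surely takes one of finitely many values.\<close>

lemma rank_deficit_sum_le_refined:
  fixes w :: "'i \<Rightarrow> real"
  assumes "finite I" "0 \<le> \<beta>"
  shows "(\<Sum>m\<in>I. max 0 (\<beta> - real (card {j\<in>I. w m \<le> w j})))
          \<le> \<beta>\<^sup>2 / 2 - (max 0 (\<beta> - real (card I)))\<^sup>2 / 2"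
  using assms(1)
proof (induction "card I" arbitrary: I)
  case 0
  then show ?case using assms(2) by simp
next
  case (Suc k)
  then have "w ` I \<noteq> {}" by auto
  then obtain m0 where m0: "m0 \<in> I" "w m0 = Min (w ` I)"
    using Min_in[of "w ` I"] Suc.prems by (metis finite_imageI imageE)
  then have m0_min: "w m0 \<le> w j" if "j \<in> I" for j
    using Suc.prems that by simp
  define J where "J = I - {m0}"
  have J: "finite J" "card J = k" "J \<subseteq> I"
    using Suc m0 by (auto simp: J_def)
  have "(\<Sum>m\<in>I. max 0 (\<beta> - real (card {j\<in>I. w m \<le> w j})))
     = max 0 (\<beta> - real (card I)) + (\<Sum>m\<in>J. max 0 (\<beta> - real (card {j\<in>I. w m \<le> w j})))"
  proof -
    have "{j\<in>I. w m0 \<le> w j} = I" using m0_min by auto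
    then show ?thesis using Suc.prems m0(1) by (simp add: J_def sum.remove)
  qed
  also have "\<dots> \<le> max 0 (\<beta> - real (card I)) + (\<Sum>m\<in>J. max 0 (\<beta> - real (card {j\<in>J. w m \<le> w j})))"
    using Suc.prems J by (intro add_left_mono sum_mono max.mono diff_left_mono of_nat_mono card_mono) auto
  also have "\<dots> \<le> max 0 (\<beta> - real (card I)) + (\<beta>\<^sup>2 / 2 - (max 0 (\<beta> - real k))\<^sup>2 / 2)"
    using Suc.hyps(1)[of J] J by simp
  also have "\<dots> \<le> \<beta>\<^sup>2 / 2 - (max 0 (\<beta> - real (card I)))\<^sup>2 / 2"
    using \<open>Suc k = card I\<close>[symmetric]
    by (cases "\<beta> \<le> real (card I)") (auto simp: power2_eq_square field_simps)
  finally show ?case .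
qed

lemma rank_deficit_sum_le:
  fixes w :: "'i \<Rightarrow> real"
  assumes "finite I" "0 \<le> \<beta>"
  shows "(\<Sum>m\<in>I. max 0 (\<beta> - real (card {j\<in>I. w m \<le> w j}))) \<le> \<beta>\<^sup>2 / 2"
  using rank_deficit_sum_le_refined[OF assms, of w] zero_le_power2[of "max 0 (\<beta> - real (card I))"]
  by linarith

lemma sum_max_zero_diff_ge:
  fixes p :: "'i \<Rightarrow> real"
  assumes "finite I" "(\<Sum>i\<in>I. p i) \<le> \<alpha> * real (card I)^2"
  shows "\<alpha> * real (card I)^2 \<le> (\<Sum>i\<in>I. max 0 (2 * \<alpha> * real (card I) - p i))"
proof -
  have "\<alpha> * real (card I)^2 \<le> (\<Sum>i\<in>I. 2 * \<alpha> * real (card I) - p i)"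
    using assms(2) by (simp add: sum_subtractf power2_eq_square algebra_simps)
  also have "\<dots> \<le> (\<Sum>i\<in>I. max 0 (2 * \<alpha> * real (card I) - p i))"
    by (intro sum_mono) simp
  finally show ?thesis .
qed

lemma permute_vec_permute_vec: "permute_vec \<pi> (permute_vec \<rho> x) = permute_vec (\<rho> \<circ> \<pi>) x"
  by (simp add: permute_vec_def)

lemma permute_vec_id: "permute_vec id x = x"
  by (simp add: permute_vec_def)

lemma measurable_permute_vec:
  assumes "\<pi> permutes {..<n}"
  shows "permute_vec \<pi> \<in> PiM {..<n} (\<lambda>_. N) \<rightarrow>\<^sub>M PiM {..<n} (\<lambda>_. N)"
proof (rule measurable_PiM_single')
  show "(\<lambda>x. permute_vec \<pi> x i) \<in> PiM {..<n} (\<lambda>_. N) \<rightarrow>\<^sub>M N" if "i \<in> {..<n}" for i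
    using permutes_in_image[OF assms] that
    by (simp add: permute_vec_def measurable_component_singleton)
  show "permute_vec \<pi> \<in> space (PiM {..<n} (\<lambda>_. N)) \<rightarrow> (\<Pi>\<^sub>E i\<in>{..<n}. space N)"
    using permutes_in_image[OF assms] permutes_not_in[OF assms]
    by (auto simp: permute_vec_def space_PiM PiE_iff extensional_def)
qed

lemma exchangeable_integral_permute_vec:
  fixes f :: "(nat \<Rightarrow> 'a) \<Rightarrow> real"
  assumes X: "X \<in> P \<rightarrow>\<^sub>M PiM {..<n} (\<lambda>_. N)" and exch: "exchangeable_rv P n N X"
    and \<pi>: "\<pi> permutes {..<n}" and f: "f \<in> borel_measurable (PiM {..<n} (\<lambda>_. N))"
  shows "(\<integral>\<omega>. f (permute_vec \<pi> (X \<omega>)) \<partial>P) = (\<integral>\<omega>. f (X \<omega>) \<partial>P)"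
proof -
  have "(\<integral>\<omega>. f (permute_vec \<pi> (X \<omega>)) \<partial>P)
      = (\<integral>x. f x \<partial>distr P (PiM {..<n} (\<lambda>_. N)) (\<lambda>\<omega>. permute_vec \<pi> (X \<omega>)))"
    using measurable_compose[OF X measurable_permute_vec[OF \<pi>]] f
    by (simp add: integral_distr)
  also have "\<dots> = (\<integral>x. f x \<partial>distr P (PiM {..<n} (\<lambda>_. N)) X)"
    using exch \<pi> by (simp add: exchangeable_rv_def)
  also have "\<dots> = (\<integral>\<omega>. f (X \<omega>) \<partial>P)"
    using X f by (simp add: integral_distr)
  finally show ?thesis .
qed

definition perm_rank ::
  "((nat \<Rightarrow> 'a) \<Rightarrow> real) \<Rightarrow> (nat \<Rightarrow> nat \<Rightarrow> nat) \<Rightarrow> nat \<Rightarrow> nat \<Rightarrow> (nat \<Rightarrow> 'a) \<Rightarrow> nat" where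
  "perm_rank T s M m y =
     card {j\<in>{..M}. T (permute_vec (inv (s m)) y) \<le> T (permute_vec (inv (s j)) y)}"

definition avg_pvalue ::
  "((nat \<Rightarrow> 'a) \<Rightarrow> real) \<Rightarrow> nat \<Rightarrow> (nat \<Rightarrow> nat \<Rightarrow> nat) \<Rightarrow> (nat \<Rightarrow> 'a) \<Rightarrow> real" where
  "avg_pvalue T M s x =
     (\<Sum>m\<le>M. \<Sum>m'\<le>M. (if T (permute_vec (s m \<circ> inv (s m')) x) \<ge> T x then 1 else 0))
       / (1 + real M)^2"

lemma one_le_perm_rank:
  assumes "m \<le> M"
  shows "1 \<le> perm_rank T s M m y"
proof -
  have "m \<in> {j\<in>{..M}. T (permute_vec (inv (s m)) y) \<le> T (permute_vec (inv (s j)) y)}"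
    using assms by simp
  then have "0 < perm_rank T s M m y"
    unfolding perm_rank_def by (subst card_gt_0_iff) auto
  then show ?thesis by simp
qed

lemma avg_pvalue_eq_perm_rank:
  assumes "\<And>m. m \<le> M \<Longrightarrow> s m permutes {..<n}"
  shows "avg_pvalue T M s x =
           (\<Sum>m\<le>M. real (perm_rank T s M m (permute_vec (s m) x))) / (1 + real M)^2"
proof -
  have "(\<Sum>m'\<le>M. (if T (permute_vec (s m \<circ> inv (s m')) x) \<ge> T x then 1 else 0))
          = real (perm_rank T s M m (permute_vec (s m) x))" if "m \<le> M" for m
  proof -
    have "permute_vec (inv (s m)) (permute_vec (s m) x) = x"
      using permutes_inv_o(1)[OF assms[OF that]] by (simp add: permute_vec_permute_vec permute_vec_id)
    then show ?thesis
      by (simp add: perm_rank_def permute_vec_permute_vec sum.If_cases Int_def)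
  qed
  then show ?thesis
    unfolding avg_pvalue_def by (intro arg_cong2[where f="(/)"] sum.cong) simp_all
qed

lemma measurable_perm_rank:
  assumes T: "T \<in> borel_measurable (PiM {..<n} (\<lambda>_. N))"
    and s: "\<And>m. m \<le> M \<Longrightarrow> s m permutes {..<n}" and "m \<le> M"
  shows "(\<lambda>y. real (perm_rank T s M m y)) \<in> borel_measurable (PiM {..<n} (\<lambda>_. N))"
proof -
  have stat: "(\<lambda>y. T (permute_vec (inv (s j)) y)) \<in> borel_measurable (PiM {..<n} (\<lambda>_. N))"
    if "j \<le> M" for j
    by (rule measurable_compose[OF measurable_permute_vec T]) (intro permutes_inv s that)
  have "(\<lambda>y. real (perm_rank T s M m y))
      = (\<lambda>y. \<Sum>j\<le>M. if T (permute_vec (inv (s m)) y) \<le> T (permute_vec (inv (s j)) y) then 1 else 0)"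
    by (simp add: perm_rank_def sum.If_cases Int_def)
  also have "\<dots> \<in> borel_measurable (PiM {..<n} (\<lambda>_. N))"
    using stat \<open>m \<le> M\<close> by measurable
  finally show ?thesis .
qed

lemma measurable_avg_pvalue:
  assumes T: "T \<in> borel_measurable (PiM {..<n} (\<lambda>_. N))"
    and s: "\<And>m. m \<le> M \<Longrightarrow> s m permutes {..<n}"
  shows "avg_pvalue T M s \<in> borel_measurable (PiM {..<n} (\<lambda>_. N))"
proof -
  have "(\<lambda>x. T (permute_vec (s m \<circ> inv (s m')) x)) \<in> borel_measurable (PiM {..<n} (\<lambda>_. N))"
    if "m \<le> M" "m' \<le> M" for m m'
    by (rule measurable_compose[OF measurable_permute_vec T])
      (intro permutes_compose permutes_inv s that)
  then show ?thesis
    unfolding avg_pvalue_def[abs_def] using T by measurable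
qed

lemma avg_pvalue_pos:
  assumes "\<And>m. m \<le> M \<Longrightarrow> s m permutes {..<n}"
  shows "0 < avg_pvalue T M s x"
proof -
  have "1 \<le> real (perm_rank T s M 0 (permute_vec (s 0) x))"
    using one_le_perm_rank[of 0 M] by simp
  also have "\<dots> \<le> (\<Sum>m\<le>M. real (perm_rank T s M m (permute_vec (s m) x)))"
    by (rule member_le_sum) auto
  finally show ?thesis
    by (simp add: avg_pvalue_eq_perm_rank[OF assms])
qed

lemma rank_deficit_sum_ge_of_avg_pvalue_le:
  assumes "\<And>m. m \<le> M \<Longrightarrow> s m permutes {..<n}" and "avg_pvalue T M s x \<le> \<alpha>"
  shows "\<alpha> * (1 + real M)\<^sup>2
           \<le> (\<Sum>m\<le>M. max 0 (2 * \<alpha> * (1 + real M) - real (perm_rank T s M m (permute_vec (s m) x))))"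
proof -
  have "(\<Sum>m\<le>M. real (perm_rank T s M m (permute_vec (s m) x))) \<le> \<alpha> * real (card {..M})^2"
    using assms(2) by (simp add: avg_pvalue_eq_perm_rank[OF assms(1)] field_simps)
  from sum_max_zero_diff_ge[OF _ this] show ?thesis by simp
qed

lemma integrable_rank_deficit:
  assumes P: "prob_space P" and f: "f \<in> P \<rightarrow>\<^sub>M PiM {..<n} (\<lambda>_. N)"
    and T: "T \<in> borel_measurable (PiM {..<n} (\<lambda>_. N))"
    and s: "\<And>m. m \<le> M \<Longrightarrow> s m permutes {..<n}" and "m \<le> M" "0 \<le> c"
  shows "integrable P (\<lambda>\<omega>. max 0 (c - real (perm_rank T s M m (f \<omega>))))"
proof (rule finite_measure.integrable_const_bound[where B=c])
  show "finite_measure P" using P by (rule prob_space.axioms)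
  show "AE \<omega> in P. norm (max 0 (c - real (perm_rank T s M m (f \<omega>)))) \<le> c"
    using one_le_perm_rank[OF \<open>m \<le> M\<close>] \<open>0 \<le> c\<close> by simp
  show "(\<lambda>\<omega>. max 0 (c - real (perm_rank T s M m (f \<omega>)))) \<in> borel_measurable P"
    using measurable_compose[OF f measurable_perm_rank[OF T s \<open>m \<le> M\<close>]] by measurable
qed

lemma integral_rank_deficit_le:
  fixes P :: "'w measure" and X :: "'w \<Rightarrow> nat \<Rightarrow> 'a"
  assumes P: "prob_space P"
    and X: "X \<in> P \<rightarrow>\<^sub>M PiM {..<n} (\<lambda>_. N)" and exch: "exchangeable_rv P n N X"
    and T: "T \<in> borel_measurable (PiM {..<n} (\<lambda>_. N))"
    and s: "\<And>m. m \<le> M \<Longrightarrow> s m permutes {..<n}" and "0 \<le> c"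
  shows "(\<integral>\<omega>. (\<Sum>m\<le>M. max 0 (c - real (perm_rank T s M m (permute_vec (s m) (X \<omega>))))) \<partial>P)
           \<le> c\<^sup>2 / 2"
proof -
  interpret P: prob_space P by (fact P)
  let ?d = "\<lambda>m y. max 0 (c - real (perm_rank T s M m y))"
  have perm_X: "(\<lambda>\<omega>. permute_vec (s m) (X \<omega>)) \<in> P \<rightarrow>\<^sub>M PiM {..<n} (\<lambda>_. N)" if "m \<le> M" for m
    using measurable_compose[OF X measurable_permute_vec[OF s[OF that]]] .
  note integrable = integrable_rank_deficit[where s=s and M=M, OF P _ T s _ \<open>0 \<le> c\<close>]
  have "(\<integral>\<omega>. (\<Sum>m\<le>M. ?d m (permute_vec (s m) (X \<omega>))) \<partial>P)
      = (\<Sum>m\<le>M. \<integral>\<omega>. ?d m (permute_vec (s m) (X \<omega>)) \<partial>P)"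
    using integrable[OF perm_X] by (intro Bochner_Integration.integral_sum) auto
  also have "\<dots> = (\<Sum>m\<le>M. \<integral>\<omega>. ?d m (X \<omega>) \<partial>P)"
  proof (rule sum.cong)
    fix m assume "m \<in> {..M}"
    then have "m \<le> M" by simp
    have "?d m \<in> borel_measurable (PiM {..<n} (\<lambda>_. N))"
      using measurable_perm_rank[OF T s \<open>m \<le> M\<close>] by measurable
    then show "(\<integral>\<omega>. ?d m (permute_vec (s m) (X \<omega>)) \<partial>P) = (\<integral>\<omega>. ?d m (X \<omega>) \<partial>P)"
      by (rule exchangeable_integral_permute_vec[OF X exch s[OF \<open>m \<le> M\<close>]])
  qed simp
  also have "\<dots> = (\<integral>\<omega>. (\<Sum>m\<le>M. ?d m (X \<omega>)) \<partial>P)"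
    using integrable[OF X] by (intro Bochner_Integration.integral_sum[symmetric]) auto
  also have "\<dots> \<le> (\<integral>\<omega>. c\<^sup>2 / 2 \<partial>P)"
  proof (intro integral_mono)
    show "(\<Sum>m\<le>M. ?d m (X \<omega>)) \<le> c\<^sup>2 / 2" for \<omega>
      unfolding perm_rank_def using \<open>0 \<le> c\<close> by (intro rank_deficit_sum_le) auto
  qed (use integrable[OF X] in auto)
  also have "\<dots> = c\<^sup>2 / 2"
    by (simp add: P.prob_space)
  finally show ?thesis .
qed

theorem avg_pvalue_fixed_perms_le:
  fixes P :: "'w measure" and X :: "'w \<Rightarrow> nat \<Rightarrow> 'a"
  assumes P: "prob_space P"
    and X: "X \<in> P \<rightarrow>\<^sub>M PiM {..<n} (\<lambda>_. N)" and exch: "exchangeable_rv P n N X"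
    and T: "T \<in> borel_measurable (PiM {..<n} (\<lambda>_. N))"
    and s: "\<And>m. m \<le> M \<Longrightarrow> s m permutes {..<n}" and "0 \<le> \<alpha>"
  shows "measure P {\<omega> \<in> space P. avg_pvalue T M s (X \<omega>) \<le> \<alpha>} \<le> 2 * \<alpha>"
proof (cases "\<alpha> = 0")
  case True
  have "\<not> avg_pvalue T M s x \<le> 0" for x
    using avg_pvalue_pos[where s=s and M=M, OF s] by (simp add: not_le)
  then show ?thesis using True by simp
next
  case False
  with \<open>0 \<le> \<alpha>\<close> have "0 < \<alpha>" by simp
  interpret P: prob_space P by (fact P)
  define K where "K = 1 + real M"
  define c where "c = 2 * \<alpha> * K"
  define u where
    "u \<omega> = (\<Sum>m\<le>M. max 0 (c - real (perm_rank T s M m (permute_vec (s m) (X \<omega>)))))" for \<omega>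
  have "0 < K" "0 < c" using \<open>0 < \<alpha>\<close> by (simp_all add: K_def c_def)
  have u_int: "integrable P u"
    unfolding u_def using measurable_compose[OF X measurable_permute_vec[OF s]]
    by (intro Bochner_Integration.integrable_sum integrable_rank_deficit[OF P _ T s])
      (auto intro: less_imp_le \<open>0 < c\<close>)
  have "{\<omega> \<in> space P. avg_pvalue T M s (X \<omega>) \<le> \<alpha>} \<subseteq> {\<omega> \<in> space P. \<alpha> * K\<^sup>2 \<le> u \<omega>}"
    using rank_deficit_sum_ge_of_avg_pvalue_le[OF s] by (auto simp: u_def c_def K_def)
  then have "measure P {\<omega> \<in> space P. avg_pvalue T M s (X \<omega>) \<le> \<alpha>}
      \<le> measure P {\<omega> \<in> space P. \<alpha> * K\<^sup>2 \<le> u \<omega>}"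
    using u_int by (intro P.finite_measure_mono) auto
  also have "\<dots> \<le> (\<integral>\<omega>. u \<omega> \<partial>P) / (\<alpha> * K\<^sup>2)"
  proof (rule integral_Markov_inequality_measure[OF u_int, where A="space P"])
    show "AE \<omega> in P. 0 \<le> u \<omega>" by (simp add: u_def sum_nonneg)
  qed (use \<open>0 < \<alpha>\<close> \<open>0 < K\<close> in auto)
  also have "\<dots> \<le> (c\<^sup>2 / 2) / (\<alpha> * K\<^sup>2)"
    using integral_rank_deficit_le[where s=s and M=M and c=c, OF P X exch T s]
      \<open>0 < \<alpha>\<close> \<open>0 < K\<close> \<open>0 < c\<close>
    by (intro divide_right_mono) (auto simp: u_def)
  also have "\<dots> = 2 * \<alpha>"
    using \<open>0 < \<alpha>\<close> \<open>0 < K\<close> by (simp add: c_def power2_eq_square)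
  finally show ?thesis .
qed

lemma singleton_in_sets_PiM_count_space:
  assumes "finite I" "t \<in> space (PiM I (\<lambda>_. count_space A))"
  shows "{t} \<in> sets (PiM I (\<lambda>_. count_space A))"
proof -
  have "{t} = {v \<in> space (PiM I (\<lambda>_. count_space A)). \<forall>i\<in>I. v i = t i}"
    using assms(2) by (auto simp: space_PiM intro: PiE_ext)
  also have "\<dots> \<in> sets (PiM I (\<lambda>_. count_space A))"
    using assms(1) by measurable
  finally show ?thesis .
qed

lemma (in prob_space) prob_indep_pair:
  assumes X: "X \<in> M \<rightarrow>\<^sub>M S" and Y: "Y \<in> M \<rightarrow>\<^sub>M V"
    and indep: "distr M (S \<Otimes>\<^sub>M V) (\<lambda>\<omega>. (X \<omega>, Y \<omega>)) = distr M S X \<Otimes>\<^sub>M distr M V Y"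
    and A: "A \<in> sets S" and B: "B \<in> sets V"
  shows "prob {\<omega> \<in> space M. X \<omega> \<in> A \<and> Y \<omega> \<in> B}
           = prob {\<omega> \<in> space M. X \<omega> \<in> A} * prob {\<omega> \<in> space M. Y \<omega> \<in> B}"
proof -
  interpret Y: prob_space "distr M V Y" using Y by (rule prob_space_distr)
  have "prob {\<omega> \<in> space M. X \<omega> \<in> A \<and> Y \<omega> \<in> B}
      = measure (distr M (S \<Otimes>\<^sub>M V) (\<lambda>\<omega>. (X \<omega>, Y \<omega>))) (A \<times> B)"
    using X Y A B by (subst measure_distr) (auto intro!: measurable_Pair arg_cong[where f=prob])
  also have "\<dots> = measure (distr M S X) A * measure (distr M V Y) B"
    using A B
    by (simp add: indep measure_def Y.emeasure_pair_measure_Times enn2real_mult)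
  also have "\<dots> = prob {\<omega> \<in> space M. X \<omega> \<in> A} * prob {\<omega> \<in> space M. Y \<omega> \<in> B}"
    using X Y A B by (simp add: measure_distr vimage_def Int_def conj_commute)
  finally show ?thesis .
qed

lemma (in prob_space) prob_indep_finite_mixture_le:
  assumes X: "X \<in> M \<rightarrow>\<^sub>M S" and Y: "Y \<in> M \<rightarrow>\<^sub>M V"
    and indep: "distr M (S \<Otimes>\<^sub>M V) (\<lambda>\<omega>. (X \<omega>, Y \<omega>)) = distr M S X \<Otimes>\<^sub>M distr M V Y"
    and K: "finite K" "\<And>t. t \<in> K \<Longrightarrow> {t} \<in> sets V"
    and Y_in_K: "AE \<omega> in M. Y \<omega> \<in> K"
    and \<Phi>_sets: "\<And>t. t \<in> K \<Longrightarrow> {x \<in> space S. \<Phi> x t} \<in> sets S"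
    and \<Phi>_le: "\<And>t. t \<in> K \<Longrightarrow> prob {\<omega> \<in> space M. \<Phi> (X \<omega>) t} \<le> \<beta>"
    and "0 \<le> \<beta>"
  shows "prob {\<omega> \<in> space M. \<Phi> (X \<omega>) (Y \<omega>)} \<le> \<beta>"
proof -
  define A where "A t = {\<omega> \<in> space M. X \<omega> \<in> {x \<in> space S. \<Phi> x t} \<and> Y \<omega> \<in> {t}}" for t
  define B where "B t = {\<omega> \<in> space M. Y \<omega> \<in> {t}}" for t
  have B_sets: "B t \<in> events" if "t \<in> K" for t
    unfolding B_def using Y K(2)[OF that] by measurable
  have A_sets: "A t \<in> events" if "t \<in> K" for t
    unfolding A_def using X Y \<Phi>_sets[OF that] K(2)[OF that] by measurable
  have A_le: "prob (A t) \<le> \<beta> * prob (B t)" if "t \<in> K" for t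
  proof -
    have "prob (A t) = prob {\<omega> \<in> space M. X \<omega> \<in> {x \<in> space S. \<Phi> x t}} * prob (B t)"
      unfolding A_def B_def using X Y indep \<Phi>_sets[OF that] K(2)[OF that] by (rule prob_indep_pair)
    also have "{\<omega> \<in> space M. X \<omega> \<in> {x \<in> space S. \<Phi> x t}} = {\<omega> \<in> space M. \<Phi> (X \<omega>) t}"
      using measurable_space[OF X] by auto
    finally show ?thesis
      using \<Phi>_le[OF that] by (simp add: mult_right_mono)
  qed
  have "prob {\<omega> \<in> space M. \<Phi> (X \<omega>) (Y \<omega>)} \<le> prob (\<Union>t\<in>K. A t)"
    using Y_in_K A_sets K(1) measurable_space[OF X]
    by (intro finite_measure_mono_AE) (auto simp: A_def)
  also have "\<dots> \<le> (\<Sum>t\<in>K. prob (A t))"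
    using A_sets K(1) by (intro measure_UNION_le) auto
  also have "\<dots> \<le> (\<Sum>t\<in>K. \<beta> * prob (B t))"
    using A_le by (intro sum_mono) auto
  also have "\<dots> = \<beta> * prob (\<Union>t\<in>K. B t)"
    using B_sets K(1)
    by (subst measure_finite_Union) (auto simp: sum_distrib_left disjoint_family_on_def B_def)
  also have "\<dots> \<le> \<beta>"
    using \<open>0 \<le> \<beta>\<close> by (simp add: mult_left_le)
  finally show ?thesis .
qed

lemma AE_in_set_pmf:
  assumes "finite I"
    and \<sigma>_rv: "\<And>m. m \<in> I \<Longrightarrow> \<sigma> m \<in> P \<rightarrow>\<^sub>M count_space UNIV"
    and \<sigma>_distr: "\<And>m. m \<in> I \<Longrightarrow> distr P (count_space UNIV) (\<sigma> m) = measure_pmf q"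
  shows "AE \<omega> in P. \<forall>m\<in>I. \<sigma> m \<omega> \<in> set_pmf q"
proof -
  have "AE \<omega> in P. \<sigma> m \<omega> \<in> set_pmf q" if "m \<in> I" for m
  proof (rule AE_distrD[OF \<sigma>_rv[OF that]])
    show "AE \<pi> in distr P (count_space UNIV) (\<sigma> m). \<pi> \<in> set_pmf q"
      unfolding \<sigma>_distr[OF that] AE_measure_pmf_iff by simp
  qed
  then show ?thesis
    using \<open>finite I\<close> by (subst AE_finite_all) auto
qed

theorem avg_pvalue_indep_perms_le:
  fixes P :: "'w measure" and X :: "'w \<Rightarrow> nat \<Rightarrow> 'a" and Y :: "'w \<Rightarrow> nat \<Rightarrow> nat \<Rightarrow> nat"
  assumes P: "prob_space P"
    and X: "X \<in> P \<rightarrow>\<^sub>M PiM {..<n} (\<lambda>_. N)" and exch: "exchangeable_rv P n N X"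
    and T: "T \<in> borel_measurable (PiM {..<n} (\<lambda>_. N))"
    and Y: "Y \<in> P \<rightarrow>\<^sub>M PiM {..M} (\<lambda>_. count_space UNIV)"
    and indep: "distr P (PiM {..<n} (\<lambda>_. N) \<Otimes>\<^sub>M PiM {..M} (\<lambda>_. count_space UNIV)) (\<lambda>\<omega>. (X \<omega>, Y \<omega>))
                  = distr P (PiM {..<n} (\<lambda>_. N)) X \<Otimes>\<^sub>M distr P (PiM {..M} (\<lambda>_. count_space UNIV)) Y"
    and Y_perms: "AE \<omega> in P. Y \<omega> \<in> PiE {..M} (\<lambda>_. {\<pi>. \<pi> permutes {..<n}})"
    and "0 \<le> \<alpha>"
  shows "measure P {\<omega> \<in> space P. avg_pvalue T M (Y \<omega>) (X \<omega>) \<le> \<alpha>} \<le> 2 * \<alpha>"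
proof -
  interpret P: prob_space P by (fact P)
  define K where "K = PiE {..M} (\<lambda>_. {\<pi>. \<pi> permutes {..<n}})"
  have K_perm: "\<And>m. m \<le> M \<Longrightarrow> t m permutes {..<n}" if "t \<in> K" for t
    using that by (auto simp: K_def)
  have K_finite: "finite K"
    unfolding K_def by (intro finite_PiE finite_permutations) auto
  have K_sets: "{t} \<in> sets (PiM {..M} (\<lambda>_. count_space UNIV))" if "t \<in> K" for t
    using that unfolding K_def by (intro singleton_in_sets_PiM_count_space) (auto simp: space_PiM)
  have avg_sets: "{x \<in> space (PiM {..<n} (\<lambda>_. N)). avg_pvalue T M t x \<le> \<alpha>} \<in> sets (PiM {..<n} (\<lambda>_. N))"
    if "t \<in> K" for t
    using measurable_avg_pvalue[OF T K_perm[OF that]] by measurable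
  have avg_le: "P.prob {\<omega> \<in> space P. avg_pvalue T M t (X \<omega>) \<le> \<alpha>} \<le> 2 * \<alpha>" if "t \<in> K" for t
    using avg_pvalue_fixed_perms_le[OF P X exch T K_perm[OF that] \<open>0 \<le> \<alpha>\<close>] .
  show ?thesis
    by (rule P.prob_indep_finite_mixture_le[where \<Phi>="\<lambda>x t. avg_pvalue T M t x \<le> \<alpha>",
          OF X Y indep K_finite K_sets Y_perms[folded K_def] avg_sets avg_le])
      (simp_all add: \<open>0 \<le> \<alpha>\<close>)
qed

theorem theorem9:
  fixes P :: "'w measure" and N :: "'a measure" and n :: nat
    and X :: "'w \<Rightarrow> nat \<Rightarrow> 'a"
    and T :: "(nat \<Rightarrow> 'a) \<Rightarrow> real"
    and q :: "(nat \<Rightarrow> nat) pmf"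
    and M :: nat
    and \<sigma> :: "nat \<Rightarrow> 'w \<Rightarrow> (nat \<Rightarrow> nat)"
    and \<alpha> :: real
  assumes "prob_space P"
    and X_rv: "X \<in> measurable P (PiM {..<n} (\<lambda>_. N))"
    and exch: "exchangeable_rv P n N X"
    and T_meas: "T \<in> borel_measurable (PiM {..<n} (\<lambda>_. N))"
    and q_perm: "set_pmf q \<subseteq> {\<pi>. \<pi> permutes {..<n}}"
    and M_ge: "M \<ge> 1"
    and \<sigma>_rv: "\<And>m. m \<le> M \<Longrightarrow> \<sigma> m \<in> measurable P (count_space UNIV)"
    and \<sigma>_distr: "\<And>m. m \<le> M \<Longrightarrow> distr P (count_space UNIV) (\<sigma> m) = measure_pmf q"
    and \<sigma>_indep: "prob_space.indep_vars P (\<lambda>_. count_space UNIV) \<sigma> {..M}"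
    and X_indep: "distr P (PiM {..<n} (\<lambda>_. N) \<Otimes>\<^sub>M PiM {..M} (\<lambda>_. count_space UNIV))
                    (\<lambda>\<omega>. (X \<omega>, \<lambda>m\<in>{..M}. \<sigma> m \<omega>))
                  = distr P (PiM {..<n} (\<lambda>_. N)) X
                    \<Otimes>\<^sub>M distr P (PiM {..M} (\<lambda>_. count_space UNIV)) (\<lambda>\<omega>. \<lambda>m\<in>{..M}. \<sigma> m \<omega>)"
    and \<alpha>_range: "0 \<le> \<alpha>" "\<alpha> \<le> 1"
  shows "measure P {\<omega> \<in> space P.
           (\<Sum>m\<le>M. \<Sum>m'\<le>M.
              (if T (permute_vec (\<sigma> m \<omega> \<circ> inv (\<sigma> m' \<omega>)) (X \<omega>)) \<ge> T (X \<omega>) then 1 else 0))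
             / (1 + real M)^2 \<le> \<alpha>} \<le> 2 * \<alpha>"
proof -
  \<comment> \<open>Only the independence of the whole tuple from \<open>X\<close> matters: the bound holds for every
    fixed tuple.\<close>
  define \<sigma>s where "\<sigma>s \<omega> = (\<lambda>m\<in>{..M}. \<sigma> m \<omega>)" for \<omega>
  have \<sigma>s: "\<sigma>s \<in> P \<rightarrow>\<^sub>M PiM {..M} (\<lambda>_. count_space UNIV)"
    unfolding \<sigma>s_def by (rule measurable_restrict) (use \<sigma>_rv in auto)
  have "AE \<omega> in P. \<forall>m\<in>{..M}. \<sigma> m \<omega> \<in> set_pmf q"
    using \<sigma>_rv \<sigma>_distr by (intro AE_in_set_pmf) auto
  then have \<sigma>s_perms: "AE \<omega> in P. \<sigma>s \<omega> \<in> PiE {..M} (\<lambda>_. {\<pi>. \<pi> permutes {..<n}})"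
    by eventually_elim (use q_perm in \<open>auto simp: \<sigma>s_def\<close>)
  have "measure P {\<omega> \<in> space P. avg_pvalue T M (\<sigma>s \<omega>) (X \<omega>) \<le> \<alpha>} \<le> 2 * \<alpha>"
    using X_indep
    by (intro avg_pvalue_indep_perms_le[OF \<open>prob_space P\<close> X_rv exch T_meas \<sigma>s _ \<sigma>s_perms \<alpha>_range(1)])
      (simp add: \<sigma>s_def[abs_def])
  moreover have "avg_pvalue T M (\<sigma>s \<omega>) = avg_pvalue T M (\<lambda>m. \<sigma> m \<omega>)" for \<omega>
    unfolding avg_pvalue_def[abs_def] \<sigma>s_def by simp
  ultimately show ?thesis
    by (simp add: avg_pvalue_def)
qed

end
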